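(* Let $R_1,R_2,S_1,S_2$ be positive semidefinite $n\times n$ matrices such that $R_1R_2=R_2R_1$ and $S_1S_2=S_2S_1$. Let $R=R_1^{1/2}R_2^{1/2}$ and $S=S_1^{1/2}S_2^{1/2}$. Then $$\lambda_1\big((R^{1/2}SR^{1/2})^2\big)\le \lambda_1\big(R_1^{1/2}S_1R_1^{1/2}\,R_2^{1/2}S_2R_2^{1/2}\big).$$
   Context: $\lambda_1(X)$ denotes the largest eigenvalue of a matrix $X$ with real nonnegative spectrum. Note $R$ and $S$ are positive semidefinite since they are products of commuting positive semidefinite matrices. *)

theory Defs
  imports "Jordan_Normal_Form.Schur_Decomposition" "Jordan_Normal_Form.Spectral_Radius"
begin

definition psd_mat :: "nat \<Rightarrow> complex mat \<Rightarrow> bool" where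
  "psd_mat n A \<longleftrightarrow> A \<in> carrier_mat n n \<and> mat_adjoint A = A \<and>
     (\<forall>v \<in> carrier_vec n. 0 \<le> Re ((A *\<^sub>v v) \<bullet>c v))"

definition mat_sqrt :: "nat \<Rightarrow> complex mat \<Rightarrow> complex mat" where
  "mat_sqrt n A = (THE B. psd_mat n B \<and> B * B = A)"

definition lambda1 :: "complex mat \<Rightarrow> real" where
  "lambda1 X = Max (Re ` spectrum X)"

end

theory Submission
  imports Defs
begin

text \<open>Write \<open>a, b, c, d\<close> for the square roots of \<open>R\<^sub>1, R\<^sub>2, S\<^sub>1, S\<^sub>2\<close>. Then \<open>a\<close> and \<open>b\<close>
  commute, as do \<open>c\<close> and \<open>d\<close>, so \<open>ab\<close> is positive semidefinite with square root \<open>r\<close>, and the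
  left-hand matrix is \<open>M = (r cd r)\<^sup>2\<close>. Since \<open>XY\<close> and \<open>YX\<close> have the same nonzero
  eigenvalues, cyclic rotations turn every nonzero eigenvalue \<open>\<mu>\<close> of \<open>M\<close> into an eigenvalue
  of \<open>Q\<^sup>2\<close> with \<open>Q = dabc\<close>, so \<open>\<mu> = l\<^sup>2\<close> for an eigenvalue \<open>l\<close> of \<open>Q\<close>. By the Rayleigh bound
  \<open>\<bar>\<mu>\<bar> = \<bar>l\<bar>\<^sup>2\<close> is at most the largest eigenvalue of \<open>Q\<^sup>* Q = cbad\<cdot>dabc\<close>, and further
  rotations show that the nonzero eigenvalues of \<open>Q\<^sup>* Q\<close> are exactly those of the right-hand
  matrix \<open>N = (ac\<^sup>2a)(bd\<^sup>2b)\<close>.\<close>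

section \<open>Adjoints and the complex inner product\<close>

abbreviation adj :: "complex mat \<Rightarrow> complex mat" where "adj \<equiv> mat_adjoint"

lemma mat_adjoint_altdef: "adj A = mat (dim_col A) (dim_row A) (\<lambda>(i,j). cnj (A $$ (j,i)))"
  unfolding mat_adjoint_def mat_of_rows_def
  by (rule eq_matI, auto simp: conjugate_vec_def)

lemma mat_adjoint_carrier [simp]: "A \<in> carrier_mat n m \<Longrightarrow> adj A \<in> carrier_mat m n"
  by (auto simp: mat_adjoint_altdef)

lemma dim_mat_adjoint [simp]: "dim_row (adj A) = dim_col A" "dim_col (adj A) = dim_row A"
  by (auto simp: mat_adjoint_altdef)

lemma index_mat_adjoint [simp]:
  "i < dim_col A \<Longrightarrow> j < dim_row A \<Longrightarrow> adj A $$ (i,j) = cnj (A $$ (j,i))"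
  by (auto simp: mat_adjoint_altdef)

lemma mat_adjoint_adjoint [simp]: "adj (adj A) = A"
  by (rule eq_matI, auto)

lemma mat_adjoint_mult:
  assumes "A \<in> carrier_mat n m" "B \<in> carrier_mat m k"
  shows "adj (A * B) = adj B * adj A"
  using assms by (intro eq_matI) (auto simp: scalar_prod_def ac_simps)

lemma hermitian_congruence:
  assumes "A \<in> carrier_mat n n" "adj A = A" "B \<in> carrier_mat n m"
  shows "adj (adj B * A * B) = adj B * A * B"
proof -
  have "adj (adj B * A * B) = adj B * adj (adj B * A)"
    by (rule mat_adjoint_mult[of _ m n]) (use assms in auto)
  also have "adj (adj B * A) = A * B"
    using assms mat_adjoint_mult[of "adj B" m n A n] by simp
  finally show ?thesis
    using assms by (simp add: assoc_mult_mat[of _ m n _ n _ m])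
qed

lemma cscalar_prod_mat_adjoint:
  assumes "A \<in> carrier_mat n m" "x \<in> carrier_vec m" "y \<in> carrier_vec n"
  shows "(A *\<^sub>v x) \<bullet>c y = x \<bullet>c (adj A *\<^sub>v y)"
proof -
  have "(A *\<^sub>v x) \<bullet>c y = (\<Sum>i<n. \<Sum>j<m. A $$ (i,j) * x $ j * cnj (y $ i))"
    using assms by (simp add: scalar_prod_def sum_distrib_right row_def atLeast0LessThan)
  also have "\<dots> = (\<Sum>j<m. \<Sum>i<n. A $$ (i,j) * x $ j * cnj (y $ i))"
    by (rule sum.swap)
  also have "\<dots> = x \<bullet>c (adj A *\<^sub>v y)"
    using assms by (simp add: scalar_prod_def sum_distrib_left row_def atLeast0LessThan mult_ac)
  finally show ?thesis .
qed

lemma cscalar_prod_swap: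
  assumes "x \<in> carrier_vec n" "y \<in> carrier_vec n"
  shows "x \<bullet>c y = cnj (y \<bullet>c x)"
  using assms by (simp add: scalar_prod_def mult.commute)

lemma cscalar_prod_smult_left:
  assumes "x \<in> carrier_vec n" "y \<in> carrier_vec n"
  shows "(a \<cdot>\<^sub>v x) \<bullet>c y = a * (x \<bullet>c y)"
  using assms by (simp add: scalar_prod_def sum_distrib_left mult_ac)

lemma cscalar_prod_smult_right:
  assumes "x \<in> carrier_vec n" "y \<in> carrier_vec n"
  shows "x \<bullet>c (a \<cdot>\<^sub>v y) = cnj a * (x \<bullet>c y)"
  using assms by (simp add: scalar_prod_def sum_distrib_left mult_ac)

lemma cscalar_prod_self_real: "x \<bullet>c x = complex_of_real (Re (x \<bullet>c x))"
  using conjugate_square_ge_0_vec[of x] by (auto simp: less_eq_complex_def complex_eq_iff)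

lemma cscalar_prod_self_nonneg: "Re (x \<bullet>c x) \<ge> 0"
  using conjugate_square_ge_0_vec[of x] by (auto simp: less_eq_complex_def)

lemma cscalar_prod_self_pos:
  assumes "x \<in> carrier_vec n" "x \<noteq> 0\<^sub>v n"
  shows "Re (x \<bullet>c x) > 0"
  using assms conjugate_square_greater_0_vec[of x n] by (simp add: less_complex_def)

lemma smult_vec_eq_zeroD:
  assumes "v \<in> carrier_vec n" "a \<cdot>\<^sub>v v = 0\<^sub>v n" "(a::complex) \<noteq> 0"
  shows "v = 0\<^sub>v n"
proof (rule eq_vecI)
  fix i assume i: "i < dim_vec (0\<^sub>v n :: complex vec)"
  then have "a * v $ i = 0"
    using assms(1) arg_cong[OF assms(2), of "\<lambda>w. w $ i"] by simp
  then show "v $ i = 0\<^sub>v n $ i"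
    using assms(3) i by simp
qed (use assms in simp)

section \<open>Orthonormal lists and unitary matrices\<close>

definition orthonormal :: "complex vec list \<Rightarrow> bool" where
  "orthonormal vs \<longleftrightarrow>
     (\<forall>i < length vs. \<forall>j < length vs. vs ! i \<bullet>c vs ! j = (if i = j then 1 else 0))"

definition unitary_mat :: "nat \<Rightarrow> complex mat \<Rightarrow> bool" where
  "unitary_mat n U \<longleftrightarrow> U \<in> carrier_mat n n \<and> adj U * U = 1\<^sub>m n \<and> U * adj U = 1\<^sub>m n"

lemma orthonormal_cols_iff:
  assumes "M \<in> carrier_mat n k"
  shows "orthonormal (cols M) \<longleftrightarrow> adj M * M = 1\<^sub>m k"
proof -
  have entry: "(adj M * M) $$ (i,j) = col M j \<bullet>c col M i" if "i < k" "j < k" for i j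
    using assms that by (simp add: scalar_prod_def row_def col_def mult.commute)
  show ?thesis
  proof
    assume "orthonormal (cols M)"
    then show "adj M * M = 1\<^sub>m k"
      using assms by (intro eq_matI) (auto simp: entry[symmetric] orthonormal_def)
  next
    assume "adj M * M = 1\<^sub>m k"
    then show "orthonormal (cols M)"
      using assms entry by (auto simp: orthonormal_def) (metis index_one_mat(1))
  qed
qed

lemma unitary_mat_of_cols:
  assumes "set vs \<subseteq> carrier_vec n" "length vs = n" "orthonormal vs"
  shows "unitary_mat n (mat_of_cols n vs)"
proof -
  let ?U = "mat_of_cols n vs"
  have U: "?U \<in> carrier_mat n n"
    using mat_of_cols_carrier(1)[of n vs] assms(2) by simp
  have "adj ?U * ?U = 1\<^sub>m n"
    using orthonormal_cols_iff[OF U] assms by simp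
  then show ?thesis
    using mat_mult_left_right_inverse[OF mat_adjoint_carrier[OF U] U] U
    unfolding unitary_mat_def by blast
qed

lemma unitary_mat_colD:
  assumes "unitary_mat n U" "i < n"
  shows "col U i \<in> carrier_vec n" "col U i \<noteq> 0\<^sub>v n"
proof -
  have U: "U \<in> carrier_mat n n" "orthonormal (cols U)"
    using assms orthonormal_cols_iff[of U n n] unfolding unitary_mat_def by auto
  then show "col U i \<in> carrier_vec n"
    by (auto intro: carrier_vecI)
  have "col U i \<bullet>c col U i = 1"
    using U assms(2) by (auto simp: orthonormal_def)
  then show "col U i \<noteq> 0\<^sub>v n"
    by auto
qed

lemma unitary_mat_adjoint_col:
  assumes "unitary_mat n U" "i < n"
  shows "adj U *\<^sub>v col U i = unit_vec n i"
proof -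
  have U: "U \<in> carrier_mat n n" "adj U * U = 1\<^sub>m n"
    using assms unfolding unitary_mat_def by auto
  then have "adj U *\<^sub>v col U i = col (adj U * U) i"
    using col_mult2[OF mat_adjoint_carrier[OF U(1)] U(1) assms(2)] by simp
  then show ?thesis
    using U(2) assms(2) by simp
qed

lemma mat_eq_on_unitary_cols:
  assumes U: "unitary_mat n U" and X: "X \<in> carrier_mat n n" and Y: "Y \<in> carrier_mat n n"
    and eq: "\<And>i. i < n \<Longrightarrow> X *\<^sub>v col U i = Y *\<^sub>v col U i"
  shows "X = Y"
proof -
  have Uc: "U \<in> carrier_mat n n" and UU: "U * adj U = 1\<^sub>m n"
    using U unfolding unitary_mat_def by auto
  have "X * U = Y * U"
  proof (rule mat_col_eqI)
    fix i assume "i < dim_col (Y * U)"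
    then have i: "i < n"
      using Y Uc by simp
    show "col (X * U) i = col (Y * U) i"
      using col_mult2[OF X Uc i] col_mult2[OF Y Uc i] eq[OF i] by simp
  qed (use X Y Uc in auto)
  then have "(X * U) * adj U = (Y * U) * adj U"
    by simp
  then show ?thesis
    using X Y Uc UU by (simp add: assoc_mult_mat[of _ n n _ n _ n])
qed

definition vec_normalize :: "complex vec \<Rightarrow> complex vec" where
  "vec_normalize w = complex_of_real (1 / sqrt (Re (w \<bullet>c w))) \<cdot>\<^sub>v w"

lemma vec_normalize_carrier [simp]: "w \<in> carrier_vec n \<Longrightarrow> vec_normalize w \<in> carrier_vec n"
  by (simp add: vec_normalize_def)

lemma cscalar_prod_vec_normalize:
  assumes "w \<in> carrier_vec n" "w' \<in> carrier_vec n"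
  shows "vec_normalize w \<bullet>c vec_normalize w' =
    complex_of_real (1 / sqrt (Re (w \<bullet>c w)) * (1 / sqrt (Re (w' \<bullet>c w')))) * (w \<bullet>c w')"
  using assms
  by (simp add: vec_normalize_def cscalar_prod_smult_left[of _ n] cscalar_prod_smult_right[of _ n])

lemma vec_normalize_unit:
  assumes "w \<in> carrier_vec n" "w \<bullet>c w \<noteq> 0"
  shows "vec_normalize w \<bullet>c vec_normalize w = 1"
proof -
  have pos: "Re (w \<bullet>c w) > 0"
    using assms(2) cscalar_prod_self_nonneg[of w] cscalar_prod_self_real[of w]
    by (metis of_real_0 order_le_less)
  have "vec_normalize w \<bullet>c vec_normalize w =
      complex_of_real (1 / sqrt (Re (w \<bullet>c w)) * (1 / sqrt (Re (w \<bullet>c w))) * Re (w \<bullet>c w))"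
    using cscalar_prod_vec_normalize[OF assms(1) assms(1)] cscalar_prod_self_real[of w]
    by (metis of_real_mult)
  also have "\<dots> = 1"
    using pos by (simp add: field_simps)
  finally show ?thesis .
qed

lemma vec_normalize_id: "w \<bullet>c w = 1 \<Longrightarrow> vec_normalize w = w"
  by (simp add: vec_normalize_def)

lemma orthonormal_map_vec_normalize:
  assumes "set ws \<subseteq> carrier_vec n" "corthogonal ws"
  shows "orthonormal (map vec_normalize ws)"
  unfolding orthonormal_def
proof (intro allI impI)
  fix i j assume "i < length (map vec_normalize ws)" "j < length (map vec_normalize ws)"
  then have i: "i < length ws" and j: "j < length ws"
    by auto
  then have c: "ws ! i \<in> carrier_vec n" "ws ! j \<in> carrier_vec n"
    using assms(1) by auto
  show "map vec_normalize ws ! i \<bullet>c map vec_normalize ws ! j = (if i = j then 1 else 0)"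
    using vec_normalize_unit[OF c(1)] cscalar_prod_vec_normalize[OF c] corthogonalD[OF assms(2) i j] i j
    by auto
qed

lemma orthonormal_extension:
  assumes u: "u \<in> carrier_vec (Suc m)" "u \<bullet>c u = 1"
  shows "\<exists>us. length us = m \<and> set us \<subseteq> carrier_vec (Suc m) \<and> orthonormal (u # us)"
proof -
  interpret cof_vec_space "Suc m" "TYPE(complex)" .
  have u0: "u \<noteq> 0\<^sub>v (Suc m)"
    using u by auto
  define b where "b = basis_completion u"
  from basis_completion[OF u(1) u0, folded b_def]
  have b: "distinct b" "\<not> lin_dep (set b)" "set b \<subseteq> carrier_vec (Suc m)" "hd b = u"
    "length b = Suc m"
    by auto
  then obtain vs where bu: "b = u # vs"
    by (cases b) auto
  define ws where "ws = gram_schmidt (Suc m) b"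
  from gram_schmidt_result[OF b(3,1,2) ws_def]
  have ws: "corthogonal ws" "set ws \<subseteq> carrier_vec (Suc m)" "length ws = Suc m"
    by (auto simp: b(5))
  have "hd ws = u"
    unfolding ws_def bu using u(1) by simp
  then obtain wt where wsu: "ws = u # wt"
    using ws(3) by (cases ws) auto
  show ?thesis
  proof (intro exI conjI)
    show "orthonormal (u # map vec_normalize wt)"
      using orthonormal_map_vec_normalize[OF ws(2,1)] vec_normalize_id[OF u(2)] wsu by simp
  qed (use ws wsu in auto)
qed

lemma orthonormal_Cons:
  "orthonormal (u # vs) \<longleftrightarrow>
     u \<bullet>c u = 1 \<and> (\<forall>v \<in> set vs. u \<bullet>c v = 0 \<and> v \<bullet>c u = 0) \<and> orthonormal vs"
  unfolding orthonormal_def by (auto simp: All_less_Suc2 all_set_conv_all_nth)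

lemma isometry_cscalar_prod:
  assumes U: "U \<in> carrier_mat n m" "adj U * U = 1\<^sub>m m"
    and x: "x \<in> carrier_vec m" and y: "y \<in> carrier_vec m"
  shows "(U *\<^sub>v x) \<bullet>c (U *\<^sub>v y) = x \<bullet>c y"
proof -
  have "(U *\<^sub>v x) \<bullet>c (U *\<^sub>v y) = x \<bullet>c (adj U *\<^sub>v (U *\<^sub>v y))"
    using cscalar_prod_mat_adjoint[OF U(1) x] U y by simp
  also have "adj U *\<^sub>v (U *\<^sub>v y) = y"
    using U y by (simp add: assoc_mult_mat_vec[symmetric, of _ m n _ m])
  finally show ?thesis .
qed

lemma orthonormal_map_isometry:
  assumes "U \<in> carrier_mat n m" "adj U * U = 1\<^sub>m m" "set vs \<subseteq> carrier_vec m" "orthonormal vs"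
  shows "orthonormal (map ((*\<^sub>v) U) vs)"
  using assms isometry_cscalar_prod[OF assms(1,2)] by (auto simp: orthonormal_def subsetD)

lemma orthonormal_Cons_isometry_image:
  assumes W: "W \<in> carrier_mat n m" "adj W * W = 1\<^sub>m m" "adj W *\<^sub>v u = 0\<^sub>v m"
    and u: "u \<in> carrier_vec n" "u \<bullet>c u = 1"
    and vs: "set vs \<subseteq> carrier_vec m" "orthonormal vs"
  shows "orthonormal (u # map ((*\<^sub>v) W) vs)"
proof -
  have "(W *\<^sub>v x) \<bullet>c u = 0" "u \<bullet>c (W *\<^sub>v x) = 0" if x: "x \<in> carrier_vec m" for x
  proof -
    show "(W *\<^sub>v x) \<bullet>c u = 0"
      using cscalar_prod_mat_adjoint[OF W(1) x u(1)] W(3) x by simp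
    then show "u \<bullet>c (W *\<^sub>v x) = 0"
      using cscalar_prod_swap[of u n "W *\<^sub>v x"] u(1) W(1) x by simp
  qed
  then show ?thesis
    using u(2) vs orthonormal_map_isometry[OF W(1,2) vs] by (auto simp: orthonormal_Cons)
qed

lemma mat_of_cols_adjoint_mult_vec:
  assumes "set vs \<subseteq> carrier_vec n" "z \<in> carrier_vec n"
  shows "adj (mat_of_cols n vs) *\<^sub>v z = vec (length vs) (\<lambda>k. z \<bullet>c vs ! k)"
proof (rule eq_vecI)
  fix k assume "k < dim_vec (vec (length vs) (\<lambda>k. z \<bullet>c vs ! k))"
  then have k: "k < length vs" "vs ! k \<in> carrier_vec n"
    using assms(1) by auto
  then show "(adj (mat_of_cols n vs) *\<^sub>v z) $ k = vec (length vs) (\<lambda>k. z \<bullet>c vs ! k) $ k"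
    using assms(2) by (simp add: scalar_prod_def mat_of_cols_def row_def mult.commute)
qed simp

lemma mat_of_cols_adjoint_mult_vec_index:
  assumes "set vs \<subseteq> carrier_vec n" "z \<in> carrier_vec n" "i < n"
  shows "(mat_of_cols n vs *\<^sub>v (adj (mat_of_cols n vs) *\<^sub>v z)) $ i =
    (\<Sum>k < length vs. vs ! k $ i * (z \<bullet>c vs ! k))"
proof -
  have "(mat_of_cols n vs *\<^sub>v w) $ i = (\<Sum>k < length vs. vs ! k $ i * w $ k)"
    if "dim_vec w = length vs" for w
    using assms(3) that by (simp add: mat_of_cols_def scalar_prod_def row_def atLeast0LessThan)
  then show ?thesis
    using assms(1,2) by (simp add: mat_of_cols_adjoint_mult_vec)
qed

lemma orthonormal_complement:
  assumes orth: "orthonormal (u # us)" and uus: "set (u # us) \<subseteq> carrier_vec n"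
    and len: "length (u # us) = n"
  defines "W \<equiv> mat_of_cols n us"
  shows "adj W * W = 1\<^sub>m (length us)" and "adj W *\<^sub>v u = 0\<^sub>v (length us)"
    and "\<And>z. z \<in> carrier_vec n \<Longrightarrow> z \<bullet>c u = 0 \<Longrightarrow> W *\<^sub>v (adj W *\<^sub>v z) = z"
proof -
  have W: "W \<in> carrier_mat n (length us)"
    unfolding W_def by simp
  have us: "set us \<subseteq> carrier_vec n" "orthonormal us" "\<And>v. v \<in> set us \<Longrightarrow> u \<bullet>c v = 0"
    using uus orth by (auto simp: orthonormal_Cons)
  show "adj W * W = 1\<^sub>m (length us)"
    using orthonormal_cols_iff[OF W] us(1,2) by (simp add: W_def)
  show "adj W *\<^sub>v u = 0\<^sub>v (length us)"
    using uus us(3) unfolding W_def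
    by (subst mat_of_cols_adjoint_mult_vec[of _ n]) (auto intro!: eq_vecI)
  fix z assume z: "z \<in> carrier_vec n" and zu: "z \<bullet>c u = 0"
  let ?U = "mat_of_cols n (u # us)"
  have U: "unitary_mat n ?U"
    by (rule unitary_mat_of_cols[OF uus len orth])
  show "W *\<^sub>v (adj W *\<^sub>v z) = z"
  proof (rule eq_vecI)
    fix i assume "i < dim_vec z"
    then have i: "i < n"
      using z by simp
    have "z = ?U *\<^sub>v (adj ?U *\<^sub>v z)"
      using U z by (simp add: unitary_mat_def assoc_mult_mat_vec[symmetric, of _ n n _ n])
    then have "z $ i = (\<Sum>k < Suc (length us). (u # us) ! k $ i * (z \<bullet>c (u # us) ! k))"
      using mat_of_cols_adjoint_mult_vec_index[OF uus z i] by simp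
    also have "\<dots> = (\<Sum>k < length us. us ! k $ i * (z \<bullet>c us ! k))"
      using zu by (subst sum.lessThan_Suc_shift) simp
    also have "\<dots> = (W *\<^sub>v (adj W *\<^sub>v z)) $ i"
      unfolding W_def using mat_of_cols_adjoint_mult_vec_index[OF us(1) z i] by simp
    finally show "(W *\<^sub>v (adj W *\<^sub>v z)) $ i = z $ i" ..
  qed (use W z in simp)
qed

section \<open>The spectral theorem for Hermitian matrices\<close>

lemma hermitian_eigenvalue_real:
  assumes A: "A \<in> carrier_mat n n" "adj A = A"
    and v: "v \<in> carrier_vec n" "v \<noteq> 0\<^sub>v n" "A *\<^sub>v v = e \<cdot>\<^sub>v v"
  shows "e = complex_of_real (Re e)"
proof -
  have "(A *\<^sub>v v) \<bullet>c v = v \<bullet>c (A *\<^sub>v v)"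
    using cscalar_prod_mat_adjoint[OF A(1) v(1) v(1)] A(2) by simp
  then have "e * (v \<bullet>c v) = cnj e * (v \<bullet>c v)"
    using v by (simp add: cscalar_prod_smult_left[of _ n] cscalar_prod_smult_right[of _ n])
  moreover have "v \<bullet>c v \<noteq> 0"
    using v by simp
  ultimately have "cnj e = e"
    by simp
  then show ?thesis
    by (simp add: complex_eq_iff)
qed

lemma hermitian_square_kernel:
  assumes A: "A \<in> carrier_mat n n" "adj A = A" and u: "u \<in> carrier_vec n"
    and AAu: "A *\<^sub>v (A *\<^sub>v u) = 0\<^sub>v n"
  shows "A *\<^sub>v u = 0\<^sub>v n"
proof -
  have Au: "A *\<^sub>v u \<in> carrier_vec n"
    using A u by simp
  have "(A *\<^sub>v u) \<bullet>c (A *\<^sub>v u) = u \<bullet>c (A *\<^sub>v (A *\<^sub>v u))"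
    using cscalar_prod_mat_adjoint[OF A(1) u Au] A(2) by simp
  also have "\<dots> = 0"
    using AAu u by (simp add: scalar_prod_def)
  finally show ?thesis
    using Au by simp
qed

lemma hermitian_unit_eigenvector:
  assumes A: "A \<in> carrier_mat (Suc m) (Suc m)" "adj A = A"
  obtains u e where "u \<in> carrier_vec (Suc m)" "u \<bullet>c u = 1" "A *\<^sub>v u = complex_of_real e \<cdot>\<^sub>v u"
proof -
  obtain e v where v: "v \<in> carrier_vec (Suc m)" "v \<noteq> 0\<^sub>v (Suc m)" "A *\<^sub>v v = e \<cdot>\<^sub>v v"
    using spectrum_non_empty[OF A(1)] A(1)
    unfolding spectrum_def eigenvalue_def eigenvector_def by auto
  have "A *\<^sub>v vec_normalize v = e \<cdot>\<^sub>v vec_normalize v"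
    using A(1) v by (simp add: vec_normalize_def mult_mat_vec smult_smult_assoc mult.commute)
  then show ?thesis
    using that[of "vec_normalize v" "Re e"] hermitian_eigenvalue_real[OF A v]
      vec_normalize_unit[OF v(1)] v by simp
qed

text \<open>Being Hermitian, \<open>A\<close> maps the orthogonal complement of its eigenvector \<open>u\<close>,
  the range of the isometry \<open>W\<close>, into itself.\<close>
lemma hermitian_compression:
  assumes A: "A \<in> carrier_mat n n" "adj A = A" and W: "W \<in> carrier_mat n m"
    and u: "u \<in> carrier_vec n" "A *\<^sub>v u = e \<cdot>\<^sub>v u" "adj W *\<^sub>v u = 0\<^sub>v m"
    and proj: "\<And>z. z \<in> carrier_vec n \<Longrightarrow> z \<bullet>c u = 0 \<Longrightarrow> W *\<^sub>v (adj W *\<^sub>v z) = z"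
    and y: "y \<in> carrier_vec m"
  shows "A *\<^sub>v (W *\<^sub>v y) = W *\<^sub>v ((adj W * A * W) *\<^sub>v y)"
proof -
  have Wy: "W *\<^sub>v y \<in> carrier_vec n"
    using W y by simp
  have "(A *\<^sub>v (W *\<^sub>v y)) \<bullet>c u = (W *\<^sub>v y) \<bullet>c (e \<cdot>\<^sub>v u)"
    using cscalar_prod_mat_adjoint[OF A(1) Wy u(1)] A(2) u(2) by simp
  also have "\<dots> = cnj e * (y \<bullet>c (adj W *\<^sub>v u))"
    using cscalar_prod_smult_right[OF Wy u(1)] cscalar_prod_mat_adjoint[OF W y u(1)] by simp
  finally have "(A *\<^sub>v (W *\<^sub>v y)) \<bullet>c u = 0"
    using u(3) y by simp
  then have "A *\<^sub>v (W *\<^sub>v y) = W *\<^sub>v (adj W *\<^sub>v (A *\<^sub>v (W *\<^sub>v y)))"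
    using proj A(1) Wy by simp
  also have "adj W *\<^sub>v (A *\<^sub>v (W *\<^sub>v y)) = (adj W * A) *\<^sub>v (W *\<^sub>v y)"
    using assoc_mult_mat_vec[of "adj W" m n A n "W *\<^sub>v y"] A(1) W Wy by simp
  also have "\<dots> = (adj W * A * W) *\<^sub>v y"
    using assoc_mult_mat_vec[of "adj W * A" m n W m y] A(1) W y mult_carrier_mat by fastforce
  finally show ?thesis .
qed

theorem hermitian_spectral:
  assumes "A \<in> carrier_mat n n" "adj A = A"
  shows "\<exists>U d. unitary_mat n U \<and> (\<forall>i<n. A *\<^sub>v col U i = complex_of_real (d i) \<cdot>\<^sub>v col U i)"
  using assms
proof (induction n arbitrary: A)
  case 0
  then show ?case
    by (intro exI[of _ "1\<^sub>m 0"]) (auto simp: unitary_mat_def)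
next
  case (Suc m A)
  obtain u e where u: "u \<in> carrier_vec (Suc m)" "u \<bullet>c u = 1" "A *\<^sub>v u = complex_of_real e \<cdot>\<^sub>v u"
    using hermitian_unit_eigenvector[OF Suc.prems] .
  obtain us where us: "length us = m" "set us \<subseteq> carrier_vec (Suc m)" "orthonormal (u # us)"
    using orthonormal_extension[OF u(1,2)] by blast
  define W where "W = mat_of_cols (Suc m) us"
  have W: "W \<in> carrier_mat (Suc m) m"
    unfolding W_def using us(1) by auto
  have "set (u # us) \<subseteq> carrier_vec (Suc m)" "length (u # us) = Suc m"
    using u(1) us(1,2) by auto
  note compl = orthonormal_complement[OF us(3) this, folded W_def, unfolded us(1)]
  define A' where "A' = adj W * A * W"
  have "A' \<in> carrier_mat m m" "adj A' = A'"
    unfolding A'_def using Suc.prems W hermitian_congruence[of A "Suc m" W m] by auto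
  then obtain V d where V: "unitary_mat m V"
    and eig: "\<forall>i<m. A' *\<^sub>v col V i = complex_of_real (d i) \<cdot>\<^sub>v col V i"
    using Suc.IH by blast
  have Vc: "V \<in> carrier_mat m m" "set (cols V) \<subseteq> carrier_vec m" "orthonormal (cols V)"
    using V orthonormal_cols_iff[of V m m] cols_dim[of V] carrier_matD(1)[of V m m]
    by (auto simp: unitary_mat_def)
  define vs where "vs = map ((*\<^sub>v) W) (cols V)"
  have "orthonormal (u # vs)"
    unfolding vs_def by (rule orthonormal_Cons_isometry_image[OF W compl(1,2) u(1,2) Vc(2,3)])
  moreover have cs: "set (u # vs) \<subseteq> carrier_vec (Suc m)" "length (u # vs) = Suc m"
    using u(1) W Vc(1,2) by (auto simp: vs_def)
  ultimately have U: "unitary_mat (Suc m) (mat_of_cols (Suc m) (u # vs))"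
    by (intro unitary_mat_of_cols)
  have "A *\<^sub>v (u # vs) ! i = complex_of_real (case_nat e d i) \<cdot>\<^sub>v (u # vs) ! i"
    if "i < Suc m" for i
  proof (cases i)
    case (Suc k)
    then have k: "k < m" "col V k \<in> carrier_vec m"
      using that Vc(1) by auto
    have "A *\<^sub>v (W *\<^sub>v col V k) = W *\<^sub>v (A' *\<^sub>v col V k)"
      unfolding A'_def using hermitian_compression[OF Suc.prems W u(1,3) compl(2,3) k(2)] .
    then show ?thesis
      using eig k W Vc(1) Suc by (simp add: vs_def mult_mat_vec)
  qed (use u(3) in simp)
  moreover have "col (mat_of_cols (Suc m) (u # vs)) i = (u # vs) ! i" if "i < Suc m" for i
    using cs that nth_mem[of i "u # vs"] by (intro col_mat_of_cols) auto
  ultimately show ?case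
    using U by (intro exI[of _ "mat_of_cols (Suc m) (u # vs)"] exI[of _ "case_nat e d"]) auto
qed

section \<open>Positive semidefinite matrices and their square roots\<close>

definition real_diag_mat :: "nat \<Rightarrow> (nat \<Rightarrow> real) \<Rightarrow> complex mat" where
  "real_diag_mat n d = mat n n (\<lambda>(i,j). if i = j then complex_of_real (d i) else 0)"

lemma real_diag_mat_carrier [simp]: "real_diag_mat n d \<in> carrier_mat n n"
  by (simp add: real_diag_mat_def)

lemma real_diag_mat_adjoint [simp]: "adj (real_diag_mat n d) = real_diag_mat n d"
  by (rule eq_matI) (auto simp: real_diag_mat_def)

lemma real_diag_mat_mult_vec:
  assumes "y \<in> carrier_vec n"
  shows "real_diag_mat n d *\<^sub>v y = vec n (\<lambda>i. complex_of_real (d i) * y $ i)"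
proof (rule eq_vecI)
  fix i assume "i < dim_vec (vec n (\<lambda>i. complex_of_real (d i) * y $ i))"
  then have i: "i < n"
    by simp
  have "(real_diag_mat n d *\<^sub>v y) $ i =
      (\<Sum>j = 0..<n. (if i = j then complex_of_real (d i) else 0) * y $ j)"
    using i assms by (simp add: real_diag_mat_def scalar_prod_def row_def)
  also have "\<dots> = complex_of_real (d i) * y $ i"
    using i by (simp add: if_distrib[of "\<lambda>x. x * _"] cong: if_cong)
  finally show "(real_diag_mat n d *\<^sub>v y) $ i = vec n (\<lambda>i. complex_of_real (d i) * y $ i) $ i"
    using i by simp
qed (use assms in \<open>auto simp: real_diag_mat_def\<close>)

lemma cscalar_prod_self_sum:
  assumes "y \<in> carrier_vec n"
  shows "Re (y \<bullet>c y) = (\<Sum>i<n. (cmod (y $ i))\<^sup>2)"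
proof -
  have "y \<bullet>c y = (\<Sum>i<n. complex_of_real ((cmod (y $ i))\<^sup>2))"
    using assms complex_norm_square
    by (simp add: scalar_prod_def atLeast0LessThan del: of_real_power)
  then show ?thesis
    by (simp del: of_real_power)
qed

lemma unitary_diag_col:
  assumes U: "unitary_mat n U" and i: "i < n"
  shows "(U * real_diag_mat n d * adj U) *\<^sub>v col U i = complex_of_real (d i) \<cdot>\<^sub>v col U i"
proof -
  have Uc: "U \<in> carrier_mat n n"
    using U unfolding unitary_mat_def by auto
  have "(U * real_diag_mat n d * adj U) *\<^sub>v col U i = U *\<^sub>v (real_diag_mat n d *\<^sub>v unit_vec n i)"
    using Uc unitary_mat_adjoint_col[OF U i] unitary_mat_colD(1)[OF U i]
    by (simp add: assoc_mult_mat_vec[of _ n n _ n])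
  also have "real_diag_mat n d *\<^sub>v unit_vec n i = complex_of_real (d i) \<cdot>\<^sub>v unit_vec n i"
    using i by (subst real_diag_mat_mult_vec) (auto simp: unit_vec_def)
  finally show ?thesis
    using Uc i col_mult2[OF Uc one_carrier_mat i] by (simp add: mult_mat_vec)
qed

lemma unitary_diag_eq:
  assumes U: "unitary_mat n U" and A: "A \<in> carrier_mat n n"
    and eig: "\<And>i. i < n \<Longrightarrow> A *\<^sub>v col U i = complex_of_real (d i) \<cdot>\<^sub>v col U i"
  shows "A = U * real_diag_mat n d * adj U"
  using U A eig unitary_diag_col[OF U]
  by (intro mat_eq_on_unitary_cols[OF U]) (auto simp: unitary_mat_def)

lemma unitary_diag_hermitian:
  assumes "U \<in> carrier_mat n n"
  shows "adj (U * real_diag_mat n d * adj U) = U * real_diag_mat n d * adj U"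
  using hermitian_congruence[of "real_diag_mat n d" n "adj U" n] assms by simp

lemma unitary_diag_quadratic_form:
  assumes U: "U \<in> carrier_mat n n" and v: "v \<in> carrier_vec n"
  shows "Re (((U * real_diag_mat n d * adj U) *\<^sub>v v) \<bullet>c v) =
    (\<Sum>i<n. d i * (cmod ((adj U *\<^sub>v v) $ i))\<^sup>2)"
proof -
  define y where "y = adj U *\<^sub>v v"
  have y: "y \<in> carrier_vec n"
    unfolding y_def using mult_mat_vec_carrier[OF mat_adjoint_carrier[OF U] v] .
  have "((U * real_diag_mat n d * adj U) *\<^sub>v v) \<bullet>c v = (real_diag_mat n d *\<^sub>v y) \<bullet>c y"
    using cscalar_prod_mat_adjoint[OF U mult_mat_vec_carrier[OF real_diag_mat_carrier y] v] U v y
    by (simp add: y_def assoc_mult_mat_vec[of _ n n _ n])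
  also have "\<dots> = (\<Sum>i<n. complex_of_real (d i * (cmod (y $ i))\<^sup>2))"
    using y complex_norm_square
    by (simp add: real_diag_mat_mult_vec scalar_prod_def atLeast0LessThan mult.assoc
        del: of_real_power)
  finally show ?thesis
    unfolding y_def by (simp del: of_real_power)
qed

lemma psd_matD:
  assumes "psd_mat n A"
  shows "A \<in> carrier_mat n n" "adj A = A" "\<And>v. v \<in> carrier_vec n \<Longrightarrow> Re ((A *\<^sub>v v) \<bullet>c v) \<ge> 0"
  using assms unfolding psd_mat_def by auto

lemma psd_eigenvalue_nonneg:
  assumes A: "psd_mat n A" and v: "v \<in> carrier_vec n" "v \<noteq> 0\<^sub>v n" "A *\<^sub>v v = l \<cdot>\<^sub>v v"
  shows "Re l \<ge> 0"
proof -
  have "l = complex_of_real (Re l)"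
    using hermitian_eigenvalue_real[OF psd_matD(1,2)[OF A] v] .
  then have "(A *\<^sub>v v) \<bullet>c v = complex_of_real (Re l * Re (v \<bullet>c v))"
    using v(1,3) cscalar_prod_self_real[of v]
    by (simp add: cscalar_prod_smult_left[of _ n])
  then have "Re l * Re (v \<bullet>c v) \<ge> 0"
    using psd_matD(3)[OF A v(1)] by simp
  then show ?thesis
    using cscalar_prod_self_pos[OF v(1,2)] by (simp add: zero_le_mult_iff)
qed

lemma psd_spectral:
  assumes "psd_mat n A"
  obtains U d where "unitary_mat n U" "\<And>i. i < n \<Longrightarrow> d i \<ge> 0"
    "\<And>i. i < n \<Longrightarrow> A *\<^sub>v col U i = complex_of_real (d i) \<cdot>\<^sub>v col U i"
proof -
  obtain U d where U: "unitary_mat n U"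
    and eig: "\<forall>i<n. A *\<^sub>v col U i = complex_of_real (d i) \<cdot>\<^sub>v col U i"
    using hermitian_spectral[OF psd_matD(1,2)[OF assms]] by blast
  have "d i \<ge> 0" if "i < n" for i
    using psd_eigenvalue_nonneg[OF assms unitary_mat_colD(1,2)[OF U that], of "complex_of_real (d i)"]
      eig that by simp
  then show ?thesis
    using that U eig by blast
qed

text \<open>For \<open>\<nu> > 0\<close>, \<open>w = B u - \<surd>\<nu> u\<close> satisfies \<open>B w = -\<surd>\<nu> w\<close>, and \<open>-\<surd>\<nu>\<close> is not an
  eigenvalue of \<open>B\<close>.\<close>
lemma psd_sqrt_eigenvector:
  assumes B: "psd_mat n B" and u: "u \<in> carrier_vec n"
    and eig: "(B * B) *\<^sub>v u = complex_of_real \<nu> \<cdot>\<^sub>v u" and \<nu>: "\<nu> \<ge> 0"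
  shows "B *\<^sub>v u = complex_of_real (sqrt \<nu>) \<cdot>\<^sub>v u"
proof -
  have Bc: "B \<in> carrier_mat n n"
    using psd_matD(1)[OF B] .
  define a where "a = B *\<^sub>v u"
  have a: "a \<in> carrier_vec n"
    unfolding a_def using Bc u by simp
  have Ba: "B *\<^sub>v a = complex_of_real \<nu> \<cdot>\<^sub>v u"
    using eig assoc_mult_mat_vec[OF Bc Bc u] unfolding a_def by simp
  show ?thesis
  proof (cases "\<nu> = 0")
    case True
    have zero: "(0::complex) \<cdot>\<^sub>v u = 0\<^sub>v n"
      using u by (intro eq_vecI) auto
    then show ?thesis
      using hermitian_square_kernel[OF psd_matD(1,2)[OF B] u] Ba True unfolding a_def by simp
  next
    case False
    define s where "s = complex_of_real (sqrt \<nu>)"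
    have ss: "s * s = complex_of_real \<nu>"
      using \<nu> unfolding s_def by (simp flip: of_real_mult)
    define w where "w = a - s \<cdot>\<^sub>v u"
    have w: "w \<in> carrier_vec n"
      unfolding w_def using a u by simp
    have "B *\<^sub>v w = B *\<^sub>v a - s \<cdot>\<^sub>v a"
      unfolding w_def a_def using Bc u by (simp add: mult_minus_distrib_mat_vec mult_mat_vec)
    also have "\<dots> = (- s) \<cdot>\<^sub>v w"
      unfolding Ba w_def using a u ss by (intro eq_vecI) (auto simp: algebra_simps)
    finally have "B *\<^sub>v w = (- s) \<cdot>\<^sub>v w" .
    moreover have "Re (- s) < 0"
      using False \<nu> unfolding s_def by simp
    ultimately have w0: "w = 0\<^sub>v n"
      using psd_eigenvalue_nonneg[OF B w] by fastforce
    show ?thesis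
    proof (rule eq_vecI)
      fix i assume "i < dim_vec (complex_of_real (sqrt \<nu>) \<cdot>\<^sub>v u)"
      then have "i < n" "w $ i = 0"
        using u w0 by auto
      then show "(B *\<^sub>v u) $ i = (complex_of_real (sqrt \<nu>) \<cdot>\<^sub>v u) $ i"
        using a u unfolding w_def a_def[symmetric] s_def[symmetric] by simp
    qed (use Bc u in simp)
  qed
qed

lemma psd_sqrt_exists:
  assumes A: "psd_mat n A"
  shows "\<exists>B. psd_mat n B \<and> B * B = A"
proof -
  obtain U d where U: "unitary_mat n U" and d: "\<And>i. i < n \<Longrightarrow> d i \<ge> 0"
    and eig: "\<And>i. i < n \<Longrightarrow> A *\<^sub>v col U i = complex_of_real (d i) \<cdot>\<^sub>v col U i"
    using psd_spectral[OF A] by blast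
  have Uc: "U \<in> carrier_mat n n"
    using U unfolding unitary_mat_def by auto
  define B where "B = U * real_diag_mat n (\<lambda>i. sqrt (d i)) * adj U"
  have Bc: "B \<in> carrier_mat n n"
    unfolding B_def using Uc by (intro mult_carrier_mat) auto
  have "psd_mat n B"
    unfolding psd_mat_def B_def
    using Uc unitary_diag_hermitian unitary_diag_quadratic_form d by (auto intro!: sum_nonneg)
  moreover have "B * B = A"
  proof (rule mat_eq_on_unitary_cols[OF U _ psd_matD(1)[OF A]])
    fix i assume i: "i < n"
    have "B *\<^sub>v col U i = complex_of_real (sqrt (d i)) \<cdot>\<^sub>v col U i"
      unfolding B_def by (rule unitary_diag_col[OF U i])
    then show "(B * B) *\<^sub>v col U i = A *\<^sub>v col U i"
      using Bc unitary_mat_colD(1)[OF U i] eig[OF i] d[OF i]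
      by (simp add: assoc_mult_mat_vec[of _ n n _ n] mult_mat_vec smult_smult_assoc
          flip: of_real_mult)
  qed (use Bc in simp)
  ultimately show ?thesis
    by blast
qed

lemma psd_sqrt_unique:
  assumes A: "psd_mat n A" and B: "psd_mat n B" "B * B = A" and C: "psd_mat n C" "C * C = A"
  shows "B = C"
proof -
  obtain U d where U: "unitary_mat n U" and d: "\<And>i. i < n \<Longrightarrow> d i \<ge> 0"
    and eig: "\<And>i. i < n \<Longrightarrow> A *\<^sub>v col U i = complex_of_real (d i) \<cdot>\<^sub>v col U i"
    using psd_spectral[OF A] by blast
  show ?thesis
    using psd_sqrt_eigenvector[OF B(1)] psd_sqrt_eigenvector[OF C(1)] unitary_mat_colD(1)[OF U]
      eig d B(2) C(2)
    by (intro mat_eq_on_unitary_cols[OF U psd_matD(1)[OF B(1)] psd_matD(1)[OF C(1)]]) simp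
qed

lemma mat_sqrt:
  assumes "psd_mat n A"
  shows "psd_mat n (mat_sqrt n A)" "mat_sqrt n A * mat_sqrt n A = A"
proof -
  have "\<exists>!B. psd_mat n B \<and> B * B = A"
    using psd_sqrt_exists[OF assms] psd_sqrt_unique[OF assms] by blast
  from theI'[OF this] show "psd_mat n (mat_sqrt n A)" "mat_sqrt n A * mat_sqrt n A = A"
    unfolding mat_sqrt_def by auto
qed

lemma mat_sqrt_carrier: "psd_mat n A \<Longrightarrow> mat_sqrt n A \<in> carrier_mat n n"
  using mat_sqrt(1) psd_matD(1) by blast

text \<open>\<open>X\<close> preserves the eigenspaces of \<open>A\<close>, on each of which \<open>\<surd>A\<close> is a scalar.\<close>
lemma mat_sqrt_commute:
  assumes A: "psd_mat n A" and X: "X \<in> carrier_mat n n" and XA: "X * A = A * X"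
  shows "X * mat_sqrt n A = mat_sqrt n A * X"
proof -
  define B where "B = mat_sqrt n A"
  have B: "psd_mat n B" "B * B = A" "B \<in> carrier_mat n n"
    unfolding B_def using mat_sqrt[OF A] mat_sqrt_carrier[OF A] by auto
  have Ac: "A \<in> carrier_mat n n"
    using psd_matD(1)[OF A] .
  obtain U d where U: "unitary_mat n U" and d: "\<And>i. i < n \<Longrightarrow> d i \<ge> 0"
    and eig: "\<And>i. i < n \<Longrightarrow> A *\<^sub>v col U i = complex_of_real (d i) \<cdot>\<^sub>v col U i"
    using psd_spectral[OF A] by blast
  have "(X * B) *\<^sub>v col U i = (B * X) *\<^sub>v col U i" if i: "i < n" for i
  proof -
    let ?u = "col U i" and ?c = "complex_of_real (sqrt (d i))"
    have u: "?u \<in> carrier_vec n" "X *\<^sub>v ?u \<in> carrier_vec n"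
      using unitary_mat_colD(1)[OF U i] X by auto
    have "(A * X) *\<^sub>v ?u = X *\<^sub>v (A *\<^sub>v ?u)"
      unfolding XA[symmetric] by (rule assoc_mult_mat_vec[OF X Ac u(1)])
    also have "\<dots> = complex_of_real (d i) \<cdot>\<^sub>v (X *\<^sub>v ?u)"
      unfolding eig[OF i] by (rule mult_mat_vec[OF X u(1)])
    finally have "(B * B) *\<^sub>v (X *\<^sub>v ?u) = complex_of_real (d i) \<cdot>\<^sub>v (X *\<^sub>v ?u)"
      unfolding B(2) using assoc_mult_mat_vec[OF Ac X u(1)] by simp
    then have BXu: "B *\<^sub>v (X *\<^sub>v ?u) = ?c \<cdot>\<^sub>v (X *\<^sub>v ?u)"
      using psd_sqrt_eigenvector[OF B(1) u(2)] d[OF i] by blast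
    have Bu: "B *\<^sub>v ?u = ?c \<cdot>\<^sub>v ?u"
      using psd_sqrt_eigenvector[OF B(1) u(1)] B(2) eig[OF i] d[OF i] by simp
    have "(X * B) *\<^sub>v ?u = X *\<^sub>v (?c \<cdot>\<^sub>v ?u)"
      unfolding Bu[symmetric] by (rule assoc_mult_mat_vec[OF X B(3) u(1)])
    also have "\<dots> = B *\<^sub>v (X *\<^sub>v ?u)"
      unfolding BXu by (rule mult_mat_vec[OF X u(1)])
    also have "\<dots> = (B * X) *\<^sub>v ?u"
      by (rule assoc_mult_mat_vec[OF B(3) X u(1), symmetric])
    finally show ?thesis .
  qed
  then show ?thesis
    unfolding B_def[symmetric]
    by (rule mat_eq_on_unitary_cols[OF U mult_carrier_mat[OF X B(3)] mult_carrier_mat[OF B(3) X]])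
qed

lemma mat_sqrt_commute_sqrt:
  assumes "psd_mat n A" "psd_mat n B" "A * B = B * A"
  shows "mat_sqrt n A * mat_sqrt n B = mat_sqrt n B * mat_sqrt n A"
proof -
  have "B * mat_sqrt n A = mat_sqrt n A * B"
    using assms by (intro mat_sqrt_commute psd_matD(1)) auto
  then show ?thesis
    using assms(1,2) mat_sqrt_carrier by (intro mat_sqrt_commute) auto
qed

lemma psd_mult_commute:
  assumes a: "psd_mat n a" and b: "psd_mat n b" and ab: "a * b = b * a"
  shows "psd_mat n (a * b)"
proof -
  have ac: "a \<in> carrier_mat n n" and bc: "b \<in> carrier_mat n n"
    using psd_matD(1) a b by auto
  define s where "s = mat_sqrt n a"
  have s: "psd_mat n s" "s * s = a" "s \<in> carrier_mat n n"
    unfolding s_def using mat_sqrt[OF a] mat_sqrt_carrier[OF a] by auto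
  have bs: "b * s = s * b"
    unfolding s_def by (rule mat_sqrt_commute[OF a bc ab[symmetric]])
  have "Re (((a * b) *\<^sub>v v) \<bullet>c v) \<ge> 0" if v: "v \<in> carrier_vec n" for v
  proof -
    have sv: "s *\<^sub>v v \<in> carrier_vec n"
      using s(3) v by simp
    have "(a * b) *\<^sub>v v = a *\<^sub>v (b *\<^sub>v v)"
      by (rule assoc_mult_mat_vec[OF ac bc v])
    also have "\<dots> = s *\<^sub>v (s *\<^sub>v (b *\<^sub>v v))"
      unfolding s(2)[symmetric] using bc v by (intro assoc_mult_mat_vec[OF s(3) s(3)]) simp
    also have "s *\<^sub>v (b *\<^sub>v v) = b *\<^sub>v (s *\<^sub>v v)"
      using assoc_mult_mat_vec[OF s(3) bc v] assoc_mult_mat_vec[OF bc s(3) v] bs by simp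
    finally have "(a * b) *\<^sub>v v = s *\<^sub>v (b *\<^sub>v (s *\<^sub>v v))" .
    then have "((a * b) *\<^sub>v v) \<bullet>c v = (b *\<^sub>v (s *\<^sub>v v)) \<bullet>c (s *\<^sub>v v)"
      using cscalar_prod_mat_adjoint[OF s(3) _ v, of "b *\<^sub>v (s *\<^sub>v v)"] psd_matD(2)[OF s(1)] bc sv
      by simp
    then show ?thesis
      using psd_matD(3)[OF b sv] by simp
  qed
  moreover have "adj (a * b) = a * b"
    using mat_adjoint_mult[OF ac bc] psd_matD(2)[OF a] psd_matD(2)[OF b] ab by simp
  ultimately show ?thesis
    unfolding psd_mat_def using ac bc by simp
qed

lemma cscalar_prod_gram:
  assumes Q: "Q \<in> carrier_mat n m" and v: "v \<in> carrier_vec m"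
  shows "((adj Q * Q) *\<^sub>v v) \<bullet>c v = (Q *\<^sub>v v) \<bullet>c (Q *\<^sub>v v)"
  using cscalar_prod_mat_adjoint[OF mat_adjoint_carrier[OF Q] _ v, of "Q *\<^sub>v v"] Q v
    assoc_mult_mat_vec[OF mat_adjoint_carrier[OF Q] Q v]
  by simp

lemma psd_gram:
  assumes Q: "Q \<in> carrier_mat n n"
  shows "psd_mat n (adj Q * Q)"
proof -
  have "adj (adj Q * Q) = adj Q * Q"
    using mat_adjoint_mult[OF mat_adjoint_carrier[OF Q] Q] by simp
  then show ?thesis
    unfolding psd_mat_def using mult_carrier_mat[OF mat_adjoint_carrier[OF Q] Q]
      cscalar_prod_gram[OF Q] cscalar_prod_self_nonneg by simp
qed

lemma psd_quadratic_form_le_eigenvalue: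
  assumes G: "psd_mat n G" and u: "u \<in> carrier_vec n" and n: "n > 0"
  shows "\<exists>\<nu>. complex_of_real \<nu> \<in> spectrum G \<and> Re ((G *\<^sub>v u) \<bullet>c u) \<le> \<nu> * Re (u \<bullet>c u)"
proof -
  obtain U d where U: "unitary_mat n U"
    and eig: "\<forall>i<n. G *\<^sub>v col U i = complex_of_real (d i) \<cdot>\<^sub>v col U i"
    using hermitian_spectral[OF psd_matD(1,2)[OF G]] by blast
  have Uc: "U \<in> carrier_mat n n" and UU: "U * adj U = 1\<^sub>m n"
    using U unfolding unitary_mat_def by auto
  have Gc: "G \<in> carrier_mat n n"
    using psd_matD(1)[OF G] .
  have Gd: "G = U * real_diag_mat n d * adj U"
    using eig by (intro unitary_diag_eq[OF U Gc]) auto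
  have fin: "finite (d ` {..<n})" "d ` {..<n} \<noteq> {}"
    using n by auto
  obtain k where k: "k < n" "d k = Max (d ` {..<n})"
    using Max_in[OF fin] by auto
  have dk: "d i \<le> d k" if "i < n" for i
    using Max_ge[OF fin(1)] that k(2) by simp
  define y where "y = adj U *\<^sub>v u"
  have y: "y \<in> carrier_vec n"
    unfolding y_def using mult_mat_vec_carrier[OF mat_adjoint_carrier[OF Uc] u] .
  have "Re ((G *\<^sub>v u) \<bullet>c u) = (\<Sum>i<n. d i * (cmod (y $ i))\<^sup>2)"
    unfolding y_def Gd by (rule unitary_diag_quadratic_form[OF Uc u])
  also have "\<dots> \<le> (\<Sum>i<n. d k * (cmod (y $ i))\<^sup>2)"
    using dk by (intro sum_mono mult_right_mono) auto
  also have "\<dots> = d k * Re (y \<bullet>c y)"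
    unfolding cscalar_prod_self_sum[OF y] by (simp add: sum_distrib_left)
  also have "y \<bullet>c y = u \<bullet>c u"
    unfolding y_def using isometry_cscalar_prod[OF mat_adjoint_carrier[OF Uc] _ u u] UU by simp
  finally have "Re ((G *\<^sub>v u) \<bullet>c u) \<le> d k * Re (u \<bullet>c u)" .
  moreover have "eigenvector G (col U k) (complex_of_real (d k))"
    unfolding eigenvector_def using eig k(1) unitary_mat_colD(1,2)[OF U k(1)] Gc by simp
  then have "complex_of_real (d k) \<in> spectrum G"
    unfolding spectrum_def eigenvalue_def by blast
  ultimately show ?thesis
    by blast
qed

section \<open>Nonzero spectra of products\<close>

lemma spectrum_iff:
  fixes A :: "complex mat"
  assumes "A \<in> carrier_mat n n"
  shows "\<mu> \<in> spectrum A \<longleftrightarrow> (\<exists>v. v \<in> carrier_vec n \<and> v \<noteq> 0\<^sub>v n \<and> A *\<^sub>v v = \<mu> \<cdot>\<^sub>v v)"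
  using assms unfolding spectrum_def eigenvalue_def eigenvector_def by auto

lemma spectrum_carrier_0:
  fixes A :: "complex mat"
  assumes "A \<in> carrier_mat 0 0"
  shows "spectrum A = {}"
proof -
  have "v = 0\<^sub>v 0" if "v \<in> carrier_vec 0" for v :: "complex vec"
    using that by (intro eq_vecI) auto
  then show ?thesis
    using spectrum_iff[OF assms] by blast
qed

lemma psd_spectrum_nonneg:
  assumes "psd_mat n G" "\<nu> \<in> spectrum G"
  shows "Re \<nu> \<ge> 0"
  using assms psd_eigenvalue_nonneg[OF assms(1)] spectrum_iff[OF psd_matD(1)[OF assms(1)]] by blast

lemma spectrum_mult_swap:
  fixes X Y :: "complex mat"
  assumes X: "X \<in> carrier_mat n n" and Y: "Y \<in> carrier_mat n n"
    and \<mu>: "\<mu> \<in> spectrum (X * Y)" "\<mu> \<noteq> 0"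
  shows "\<mu> \<in> spectrum (Y * X)"
proof -
  obtain v where v: "v \<in> carrier_vec n" "v \<noteq> 0\<^sub>v n" "(X * Y) *\<^sub>v v = \<mu> \<cdot>\<^sub>v v"
    using \<mu>(1) spectrum_iff[OF mult_carrier_mat[OF X Y]] by blast
  define w where "w = Y *\<^sub>v v"
  have w: "w \<in> carrier_vec n"
    unfolding w_def using Y v by simp
  have Xw: "X *\<^sub>v w = \<mu> \<cdot>\<^sub>v v"
    unfolding w_def using v(3) assoc_mult_mat_vec[OF X Y v(1)] by simp
  have "w \<noteq> 0\<^sub>v n"
  proof
    assume "w = 0\<^sub>v n"
    moreover have "X *\<^sub>v 0\<^sub>v n = 0\<^sub>v n"
      using X by (intro eq_vecI) (auto simp: scalar_prod_def)
    ultimately have "\<mu> \<cdot>\<^sub>v v = 0\<^sub>v n"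
      using Xw by simp
    then show False
      using smult_vec_eq_zeroD[OF v(1) _ \<mu>(2)] v(2) by simp
  qed
  moreover have "(Y * X) *\<^sub>v w = \<mu> \<cdot>\<^sub>v w"
    using assoc_mult_mat_vec[OF Y X w] Xw mult_mat_vec[OF Y v(1)] unfolding w_def by simp
  ultimately show ?thesis
    using spectrum_iff[OF mult_carrier_mat[OF Y X]] w by blast
qed

lemma spectrum_mult_comm_nonzero:
  fixes X Y :: "complex mat"
  assumes "X \<in> carrier_mat n n" "Y \<in> carrier_mat n n" "\<mu> \<noteq> 0"
  shows "\<mu> \<in> spectrum (X * Y) \<longleftrightarrow> \<mu> \<in> spectrum (Y * X)"
  using spectrum_mult_swap[OF assms(1,2) _ assms(3)] spectrum_mult_swap[OF assms(2,1) _ assms(3)]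
  by blast

text \<open>Either \<open>Q v + \<surd>\<mu> v\<close> is an eigenvector of \<open>Q\<close> for \<open>\<surd>\<mu>\<close>, or it vanishes and \<open>v\<close> is
  one for \<open>-\<surd>\<mu>\<close>.\<close>
lemma spectrum_square_eigenvalue:
  fixes Q :: "complex mat"
  assumes Q: "Q \<in> carrier_mat n n" and \<mu>: "\<mu> \<in> spectrum (Q * Q)"
  obtains l u where "u \<in> carrier_vec n" "u \<noteq> 0\<^sub>v n" "Q *\<^sub>v u = l \<cdot>\<^sub>v u" "l * l = \<mu>"
proof -
  obtain v where v: "v \<in> carrier_vec n" "v \<noteq> 0\<^sub>v n" "(Q * Q) *\<^sub>v v = \<mu> \<cdot>\<^sub>v v"
    using \<mu> spectrum_iff[OF mult_carrier_mat[OF Q Q]] by blast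
  define s where "s = csqrt \<mu>"
  have ss: "s * s = \<mu>"
    unfolding s_def using power2_csqrt[of \<mu>] by (simp add: power2_eq_square)
  define a where "a = Q *\<^sub>v v"
  have a: "a \<in> carrier_vec n"
    unfolding a_def using Q v by simp
  have Qa: "Q *\<^sub>v a = \<mu> \<cdot>\<^sub>v v"
    unfolding a_def using v(3) assoc_mult_mat_vec[OF Q Q v(1)] by simp
  define w where "w = a + s \<cdot>\<^sub>v v"
  have w: "w \<in> carrier_vec n"
    unfolding w_def using a v by simp
  show ?thesis
  proof (cases "w = 0\<^sub>v n")
    case True
    have "Q *\<^sub>v v = (- s) \<cdot>\<^sub>v v"
    proof (rule eq_vecI)
      fix i assume "i < dim_vec ((- s) \<cdot>\<^sub>v v)"
      then have "i < n" "w $ i = 0"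
        using v True by auto
      then show "(Q *\<^sub>v v) $ i = ((- s) \<cdot>\<^sub>v v) $ i"
        using a v unfolding a_def[symmetric] w_def by (simp add: eq_neg_iff_add_eq_0)
    qed (use Q v in simp)
    then show ?thesis
      using that[of v "- s"] v ss by simp
  next
    case False
    have "Q *\<^sub>v w = \<mu> \<cdot>\<^sub>v v + s \<cdot>\<^sub>v a"
      unfolding w_def using Q a v Qa by (simp add: mult_add_distrib_mat_vec mult_mat_vec a_def)
    also have "\<dots> = s \<cdot>\<^sub>v w"
      unfolding w_def using a v ss by (intro eq_vecI) (auto simp: algebra_simps)
    finally show ?thesis
      using that[of w s] w False ss by simp
  qed
qed

text \<open>If \<open>Q u = l u\<close> then \<open>\<bar>l\<bar>\<^sup>2 \<parallel>u\<parallel>\<^sup>2 = \<langle>Q\<^sup>* Q u, u\<rangle>\<close>, which the Rayleigh bound controls.\<close>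
lemma spectrum_square_le_gram:
  assumes Q: "Q \<in> carrier_mat n n" and \<mu>: "\<mu> \<in> spectrum (Q * Q)"
  obtains \<nu> where "complex_of_real \<nu> \<in> spectrum (adj Q * Q)" "cmod \<mu> \<le> \<nu>"
proof -
  obtain l u where u: "u \<in> carrier_vec n" "u \<noteq> 0\<^sub>v n" "Q *\<^sub>v u = l \<cdot>\<^sub>v u" and l: "l * l = \<mu>"
    using spectrum_square_eigenvalue[OF Q \<mu>] .
  have "n > 0"
    using u(1,2) by (cases n) auto
  then obtain \<nu> where \<nu>: "complex_of_real \<nu> \<in> spectrum (adj Q * Q)"
    and le: "Re (((adj Q * Q) *\<^sub>v u) \<bullet>c u) \<le> \<nu> * Re (u \<bullet>c u)"
    using psd_quadratic_form_le_eigenvalue[OF psd_gram[OF Q] u(1)] by blast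
  have "((adj Q * Q) *\<^sub>v u) \<bullet>c u = (Q *\<^sub>v u) \<bullet>c (Q *\<^sub>v u)"
    by (rule cscalar_prod_gram[OF Q u(1)])
  also have "\<dots> = l * cnj l * (u \<bullet>c u)"
    unfolding u(3) using u(1)
    by (simp add: cscalar_prod_smult_left[of _ n] cscalar_prod_smult_right[of _ n] mult.assoc)
  also have "l * cnj l = complex_of_real (cmod l * cmod l)"
    using complex_norm_square[of l] by (simp add: power2_eq_square)
  also have "cmod l * cmod l = cmod \<mu>"
    by (metis l norm_mult)
  finally have "cmod \<mu> * Re (u \<bullet>c u) \<le> \<nu> * Re (u \<bullet>c u)"
    using le by simp
  then show ?thesis
    using that[OF \<nu>] cscalar_prod_self_pos[OF u(1,2)] by simp
qed

section \<open>The eigenvalue inequality\<close>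

lemma lambda1_le:
  fixes M N :: "complex mat"
  assumes M: "M \<in> carrier_mat n n" and N: "N \<in> carrier_mat n n"
    and dom: "\<And>\<mu>. \<mu> \<in> spectrum M \<Longrightarrow> \<exists>\<nu> \<in> spectrum N. Re \<mu> \<le> Re \<nu>"
  shows "lambda1 M \<le> lambda1 N"
proof (cases "spectrum M = {}")
  case True
  then have "n = 0"
    using spectrum_non_empty[OF M] by auto
  then show ?thesis
    using True spectrum_carrier_0 N by (simp add: lambda1_def)
next
  case False
  have fin: "finite (Re ` spectrum M)" "finite (Re ` spectrum N)"
    using card_finite_spectrum(1)[OF M] card_finite_spectrum(1)[OF N] by auto
  obtain \<mu> where \<mu>: "\<mu> \<in> spectrum M" "lambda1 M = Re \<mu>"
    using Max_in[OF fin(1)] False unfolding lambda1_def by auto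
  obtain \<nu> where "\<nu> \<in> spectrum N" "Re \<mu> \<le> Re \<nu>"
    using dom[OF \<mu>(1)] by blast
  then show ?thesis
    using \<mu>(2) Max_ge[OF fin(2)] unfolding lambda1_def by fastforce
qed

text \<open>An eigenvalue \<open>0\<close> of \<open>M\<close> is dominated because the nonzero eigenvalues of \<open>N\<close> are
  those of the positive semidefinite \<open>Q\<^sup>* Q\<close>.\<close>
lemma lambda1_le_via_gram:
  fixes M N Q :: "complex mat"
  assumes M: "M \<in> carrier_mat n n" and N: "N \<in> carrier_mat n n" and Q: "Q \<in> carrier_mat n n"
    and MQ: "\<And>\<mu>. \<mu> \<in> spectrum M \<Longrightarrow> \<mu> \<noteq> 0 \<Longrightarrow> \<mu> \<in> spectrum (Q * Q)"
    and GN: "\<And>\<nu>. \<nu> \<noteq> 0 \<Longrightarrow> \<nu> \<in> spectrum (adj Q * Q) \<longleftrightarrow> \<nu> \<in> spectrum N"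
  shows "lambda1 M \<le> lambda1 N"
proof (rule lambda1_le[OF M N])
  fix \<mu> assume \<mu>: "\<mu> \<in> spectrum M"
  show "\<exists>\<nu> \<in> spectrum N. Re \<mu> \<le> Re \<nu>"
  proof (cases "\<mu> = 0")
    case True
    have "n > 0"
      using \<mu> spectrum_carrier_0[of M] M by (cases n) auto
    then obtain \<nu> where \<nu>: "\<nu> \<in> spectrum N"
      using spectrum_non_empty[OF N] by blast
    have "Re \<nu> \<ge> 0"
      using \<nu> GN psd_spectrum_nonneg[OF psd_gram[OF Q]] by (cases "\<nu> = 0") auto
    then show ?thesis
      using \<nu> True by auto
  next
    case False
    obtain \<nu> where \<nu>: "complex_of_real \<nu> \<in> spectrum (adj Q * Q)" "cmod \<mu> \<le> \<nu>"
      using spectrum_square_le_gram[OF Q MQ[OF \<mu> False]] .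
    moreover have "complex_of_real \<nu> \<noteq> 0"
      using \<nu>(2) False by auto
    ultimately have "complex_of_real \<nu> \<in> spectrum N"
      using GN by blast
    then show ?thesis
      using \<nu>(2) complex_Re_le_cmod[of \<mu>] by (intro bexI[of _ "complex_of_real \<nu>"]) auto
  qed
qed

lemma spectrum_sandwich_square_nonzero:
  fixes a b c d r :: "complex mat"
  assumes carrier: "a \<in> carrier_mat n n" "b \<in> carrier_mat n n" "c \<in> carrier_mat n n"
      "d \<in> carrier_mat n n" "r \<in> carrier_mat n n"
    and r: "r * r = a * b"
    and \<mu>: "\<mu> \<in> spectrum ((r * (c * d) * r) * (r * (c * d) * r))" "\<mu> \<noteq> 0"
  shows "\<mu> \<in> spectrum ((d * a * b * c) * (d * a * b * c))"
proof -
  note assoc = assoc_mult_mat[of _ n n _ n _ n]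
  have rr: "r * (r * X) = a * (b * X)" if X: "X \<in> carrier_mat n n" for X
    using assoc_mult_mat[OF carrier(5,5) X] assoc_mult_mat[OF carrier(1,2) X] r by simp
  define Y where "Y = c * (d * (a * (b * (c * (d * r)))))"
  define Z where "Z = d * (a * (b * (c * (d * (a * b)))))"
  have "(r * (c * d) * r) * (r * (c * d) * r) = r * Y"
    unfolding Y_def using carrier by (simp add: assoc rr)
  moreover have "Y * r = c * Z"
    unfolding Y_def Z_def using carrier by (simp add: assoc r)
  moreover have "Z * c = (d * a * b * c) * (d * a * b * c)"
    unfolding Z_def using carrier by (simp add: assoc)
  moreover have "Y \<in> carrier_mat n n" "Z \<in> carrier_mat n n"
    unfolding Y_def Z_def using carrier by auto
  ultimately show ?thesis
    using \<mu> spectrum_mult_swap[of r n Y \<mu>] spectrum_mult_swap[of c n Z \<mu>] carrier by simp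
qed

lemma gram_spectrum_rotation:
  fixes a b c d :: "complex mat"
  assumes carrier: "a \<in> carrier_mat n n" "b \<in> carrier_mat n n" "c \<in> carrier_mat n n"
      "d \<in> carrier_mat n n"
    and herm: "adj a = a" "adj b = b" "adj c = c" "adj d = d"
    and ab: "a * b = b * a" and \<nu>: "\<nu> \<noteq> 0"
  shows "\<nu> \<in> spectrum (adj (d * a * b * c) * (d * a * b * c)) \<longleftrightarrow>
    \<nu> \<in> spectrum ((a * (c * c) * a) * (b * (d * d) * b))"
proof -
  note assoc = assoc_mult_mat[of _ n n _ n _ n]
  let ?Q = "d * a * b * c"
  have Q: "?Q \<in> carrier_mat n n"
    using carrier by (meson mult_carrier_mat)
  have adjQ: "adj ?Q = c * (b * (a * d))"
    using carrier herm by (simp add: mat_adjoint_mult[of _ n n _ n] assoc)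
  have ab': "a * (b * X) = b * (a * X)" if X: "X \<in> carrier_mat n n" for X
    using assoc_mult_mat[OF carrier(1,2) X] assoc_mult_mat[OF carrier(2,1) X] ab by simp
  define Y where "Y = a * (b * (c * (c * (b * (a * d)))))"
  define Z where "Z = a * (c * (c * (a * (b * (d * d)))))"
  have "?Q * adj ?Q = d * Y"
    unfolding adjQ Y_def using carrier by (simp add: assoc)
  moreover have "Y * d = b * Z"
    unfolding Y_def Z_def using carrier by (simp add: assoc ab')
  moreover have "Z * b = (a * (c * c) * a) * (b * (d * d) * b)"
    unfolding Z_def using carrier by (simp add: assoc)
  moreover have "Y \<in> carrier_mat n n" "Z \<in> carrier_mat n n"
    unfolding Y_def Z_def using carrier by auto
  ultimately show ?thesis
    using spectrum_mult_comm_nonzero[OF mat_adjoint_carrier[OF Q] Q \<nu>]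
      spectrum_mult_comm_nonzero[of d n Y \<nu>] spectrum_mult_comm_nonzero[of b n Z \<nu>] carrier \<nu>
    by simp
qed

lemma lambda1_sandwich_square_le:
  fixes a b c d r :: "complex mat"
  assumes psd: "psd_mat n a" "psd_mat n b" "psd_mat n c" "psd_mat n d"
    and ab: "a * b = b * a" and r: "r \<in> carrier_mat n n" "r * r = a * b"
  shows "lambda1 ((r * (c * d) * r) * (r * (c * d) * r)) \<le>
    lambda1 ((a * (c * c) * a) * (b * (d * d) * b))"
proof -
  note carrier = psd_matD(1)[OF psd(1)] psd_matD(1)[OF psd(2)] psd_matD(1)[OF psd(3)]
    psd_matD(1)[OF psd(4)]
  show ?thesis
  proof (rule lambda1_le_via_gram[of _ n _ "d * a * b * c"])
    show "\<mu> \<in> spectrum ((d * a * b * c) * (d * a * b * c))"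
      if "\<mu> \<in> spectrum ((r * (c * d) * r) * (r * (c * d) * r))" "\<mu> \<noteq> 0" for \<mu>
      using spectrum_sandwich_square_nonzero[OF carrier r that] .
    show "\<nu> \<in> spectrum (adj (d * a * b * c) * (d * a * b * c)) \<longleftrightarrow>
        \<nu> \<in> spectrum ((a * (c * c) * a) * (b * (d * d) * b))" if "\<nu> \<noteq> 0" for \<nu>
      using gram_spectrum_rotation[OF carrier psd_matD(2)[OF psd(1)] psd_matD(2)[OF psd(2)]
          psd_matD(2)[OF psd(3)] psd_matD(2)[OF psd(4)] ab that] .
  qed (use carrier r in \<open>meson mult_carrier_mat\<close>)+
qed

theorem lemma2:
  fixes R1 R2 S1 S2 :: "complex mat" and n :: nat
  assumes "psd_mat n R1" "psd_mat n R2" "psd_mat n S1" "psd_mat n S2"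
    and "R1 * R2 = R2 * R1" and "S1 * S2 = S2 * S1"
  defines "R \<equiv> mat_sqrt n R1 * mat_sqrt n R2"
    and "S \<equiv> mat_sqrt n S1 * mat_sqrt n S2"
  shows "lambda1 ((mat_sqrt n R * S * mat_sqrt n R) * (mat_sqrt n R * S * mat_sqrt n R))
     \<le> lambda1 ((mat_sqrt n R1 * S1 * mat_sqrt n R1) * (mat_sqrt n R2 * S2 * mat_sqrt n R2))"
proof -
  define a b c d where "a = mat_sqrt n R1" and "b = mat_sqrt n R2"
    and "c = mat_sqrt n S1" and "d = mat_sqrt n S2"
  have psd: "psd_mat n a" "psd_mat n b" "psd_mat n c" "psd_mat n d"
    and sq: "c * c = S1" "d * d = S2"
    unfolding a_def b_def c_def d_def using mat_sqrt assms(1-4) by auto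
  have ab: "a * b = b * a"
    unfolding a_def b_def using assms(1,2,5) by (rule mat_sqrt_commute_sqrt)
  have "mat_sqrt n (a * b) \<in> carrier_mat n n" "mat_sqrt n (a * b) * mat_sqrt n (a * b) = a * b"
    using mat_sqrt[OF psd_mult_commute[OF psd(1,2) ab]] psd_matD(1) by auto
  from lambda1_sandwich_square_le[OF psd ab this]
  show ?thesis
    unfolding sq unfolding R_def S_def a_def b_def c_def d_def .
qed

end
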